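(* Let $[X,\mathcal B,m^i,\nu_i]$ ($i=1,2$) be reversible random walk spaces on the same measurable space with $\nu_2\ll\nu_1$, $\mu=\frac{d\nu_2}{d\nu_1}\in L^\infty(X,\nu_1)$, $\mu>0$ $\nu_1$-a.e., and $\nu_1(X)<\infty$. Assume $\mathcal F_{1,m^1}$ satisfies a $2$-Poincaré inequality with constant $\lambda_2(\mathcal F_{1,m^1})>0$. For $u_0\in L^2(X,\nu_1)$, let $u$ be the strong solution of $u_t-\Delta_1^{m^1}u-\mu\Delta_1^{m^2}u\ni0$, $u(0)=u_0$. Then $$\|u(t)-\overline{u_0}\|_{L^2(X,\nu_1)}\le\big(\|u_0-\overline{u_0}\|_{L^2(X,\nu_1)}-\lambda_2(\mathcal F_{1,m^1})\,t\big)^+\qquad\forall t>0.$$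
   Context: Random walk space $[X,\mathcal B,m,\nu]$: measurable space with countably generated $\sigma$-algebra, probability measures $m_x$ depending measurably on $x$, $\sigma$-finite invariant measure $\nu$ ($\nu(A)=\int m_x(A)\,d\nu(x)$), reversible if $dm_x(y)d\nu(x)=dm_y(x)d\nu(y)$. $\nabla u(x,y)=u(y)-u(x)$. $\mathcal F_{1,m}(u)=\frac12\int_{X\times X}|\nabla u|\,dm_x(y)d\nu(x)$ ($+\infty$ if infinite); $(u,v)\in\Delta_1^m$ iff $(u,-v)\in\partial_{L^2(X,\nu)}\mathcal F_{1,m}(u)$. $\overline{u}=\frac1{\nu_1(X)}\int_X u\,d\nu_1$. $r$-Poincaré inequality: $\lambda_r(\mathcal F_{1,m^1})\|u-\overline u\|_{L^r(X,\nu_1)}\le\mathcal F_{1,m^1}(u)$ for all $u\in L^r(X,\nu_1)$, some $\lambda_r>0$. The operator $A=-\Delta_1^{m^1}-\mu\Delta_1^{m^2}$ on $H=L^2(X,\nu_1)$: $(u,v)\in A$ iff $u,v\in H$, $v=v_1-\mu w$ with $(u,-v_1)\in\Delta_1^{m^1}$ (w.r.t. $\nu_1$) and $(u,w)\in\Delta_1^{m^2}$ (w.r.t. $\nu_2$). Strong solution: $u\in C([0,\infty);H)\cap W^{1,2}_{\rm loc}(0,\infty;H)$, $u(0)=u_0$, $-u_t(t)\in A(u(t))$ for a.e. $t$. *)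

theory Defs
  imports "HOL-Probability.Probability"
begin

definition countably_generated :: "'a measure \<Rightarrow> bool" where
  "countably_generated M \<longleftrightarrow>
     (\<exists>G. countable G \<and> G \<subseteq> Pow (space M) \<and> sets M = sigma_sets (space M) G)"

definition random_walk_space :: "'a measure \<Rightarrow> ('a \<Rightarrow> 'a measure) \<Rightarrow> 'a measure \<Rightarrow> bool" where
  "random_walk_space M m \<nu> \<longleftrightarrow>
     countably_generated M \<and>
     sets \<nu> = sets M \<and>
     (\<forall>x\<in>space M. prob_space (m x) \<and> sets (m x) = sets M) \<and>
     (\<forall>A\<in>sets M. (\<lambda>x. emeasure (m x) A) \<in> borel_measurable M) \<and>
     sigma_finite_measure \<nu> \<and>
     (\<forall>A\<in>sets M. emeasure \<nu> A = (\<integral>\<^sup>+ x. emeasure (m x) A \<partial>\<nu>))"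

text \<open>Reversibility: the measures dm_x(y) dnu(x) and dm_y(x) dnu(y) on X x X coincide,
  expressed by testing against all nonnegative measurable functions.\<close>
definition reversible :: "'a measure \<Rightarrow> ('a \<Rightarrow> 'a measure) \<Rightarrow> 'a measure \<Rightarrow> bool" where
  "reversible M m \<nu> \<longleftrightarrow>
     (\<forall>f :: 'a \<times> 'a \<Rightarrow> ennreal. f \<in> borel_measurable (M \<Otimes>\<^sub>M M) \<longrightarrow>
        (\<integral>\<^sup>+ x. (\<integral>\<^sup>+ y. f (x, y) \<partial>m x) \<partial>\<nu>) = (\<integral>\<^sup>+ x. (\<integral>\<^sup>+ y. f (y, x) \<partial>m x) \<partial>\<nu>))"

definition L2 :: "'a measure \<Rightarrow> ('a \<Rightarrow> real) \<Rightarrow> bool" where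
  "L2 \<nu> u \<longleftrightarrow> u \<in> borel_measurable \<nu> \<and> integrable \<nu> (\<lambda>x. (u x)\<^sup>2)"

definition L2norm :: "'a measure \<Rightarrow> ('a \<Rightarrow> real) \<Rightarrow> real" where
  "L2norm \<nu> u = sqrt (\<integral>x. (u x)\<^sup>2 \<partial>\<nu>)"

definition mean :: "'a measure \<Rightarrow> ('a \<Rightarrow> real) \<Rightarrow> real" where
  "mean \<nu> u = (1 / measure \<nu> (space \<nu>)) * (\<integral>x. u x \<partial>\<nu>)"

definition F1 :: "'a measure \<Rightarrow> ('a \<Rightarrow> 'a measure) \<Rightarrow> ('a \<Rightarrow> real) \<Rightarrow> ennreal" where
  "F1 \<nu> m u = ennreal (1/2) * (\<integral>\<^sup>+ x. (\<integral>\<^sup>+ y. ennreal \<bar>u y - u x\<bar> \<partial>m x) \<partial>\<nu>)"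

definition subdiff_L2 :: "'a measure \<Rightarrow> (('a \<Rightarrow> real) \<Rightarrow> ennreal) \<Rightarrow> ('a \<Rightarrow> real) \<Rightarrow> ('a \<Rightarrow> real) \<Rightarrow> bool" where
  "subdiff_L2 \<nu> F u v \<longleftrightarrow> L2 \<nu> u \<and> L2 \<nu> v \<and>
     (\<forall>w. L2 \<nu> w \<longrightarrow>
        enn2ereal (F u) + ereal (\<integral>x. v x * (w x - u x) \<partial>\<nu>) \<le> enn2ereal (F w))"

definition Delta1 :: "'a measure \<Rightarrow> ('a \<Rightarrow> 'a measure) \<Rightarrow> ('a \<Rightarrow> real) \<Rightarrow> ('a \<Rightarrow> real) \<Rightarrow> bool" where
  "Delta1 \<nu> m u v \<longleftrightarrow> subdiff_L2 \<nu> (F1 \<nu> m) u (\<lambda>x. - v x)"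

text \<open>The operator A = -Delta_1^{m1} - mu Delta_1^{m2} on H = L^2(X,nu1).\<close>
definition opA :: "'a measure \<Rightarrow> 'a measure \<Rightarrow> ('a \<Rightarrow> 'a measure) \<Rightarrow> ('a \<Rightarrow> 'a measure)
      \<Rightarrow> ('a \<Rightarrow> real) \<Rightarrow> ('a \<Rightarrow> real) \<Rightarrow> ('a \<Rightarrow> real) \<Rightarrow> bool" where
  "opA \<nu>1 \<nu>2 m1 m2 \<mu> u v \<longleftrightarrow> L2 \<nu>1 u \<and> L2 \<nu>1 v \<and>
     (\<exists>v1 w. Delta1 \<nu>1 m1 u (\<lambda>x. - v1 x) \<and> Delta1 \<nu>2 m2 u w \<and>
        (AE x in \<nu>1. v x = v1 x - \<mu> x * w x))"

definition cont_L2 :: "'a measure \<Rightarrow> (real \<Rightarrow> 'a \<Rightarrow> real) \<Rightarrow> bool" where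
  "cont_L2 \<nu> u \<longleftrightarrow> (\<forall>t\<ge>0. L2 \<nu> (u t)) \<and>
     (\<forall>t\<ge>0. ((\<lambda>s. L2norm \<nu> (\<lambda>x. u s x - u t x)) \<longlongrightarrow> 0) (at t within {0..}))"

text \<open>u \<in> W^{1,2}_loc(0,\<infinity>; L^2(X,nu)) with (weak = strong a.e.) derivative g:
  g is L^2(X,nu)-valued, \<integral>_s^t ||g(r)||^2 dr < \<infinity> on compacts of (0,\<infinity>), and
  u(t) - u(s) = \<integral>_s^t g(r) dr in L^2(X,nu), expressed by testing against every
  phi \<in> L^2(X,nu) (Pettis; L^2(X,nu) is separable here).\<close>
definition W12loc_deriv :: "'a measure \<Rightarrow> (real \<Rightarrow> 'a \<Rightarrow> real) \<Rightarrow> (real \<Rightarrow> 'a \<Rightarrow> real) \<Rightarrow> bool" where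
  "W12loc_deriv \<nu> u g \<longleftrightarrow>
     (\<forall>r>0. L2 \<nu> (u r) \<and> L2 \<nu> (g r)) \<and>
     (\<forall>s t. 0 < s \<longrightarrow> s \<le> t \<longrightarrow>
        (\<integral>\<^sup>+ r\<in>{s..t}. ennreal ((L2norm \<nu> (g r))\<^sup>2) \<partial>lborel) < \<infinity>) \<and>
     (\<forall>\<phi>. L2 \<nu> \<phi> \<longrightarrow> (\<forall>s t. 0 < s \<longrightarrow> s \<le> t \<longrightarrow>
        set_integrable lborel {s..t} (\<lambda>r. \<integral>x. g r x * \<phi> x \<partial>\<nu>) \<and>
        (\<integral>x. (u t x - u s x) * \<phi> x \<partial>\<nu>) = (LINT r:{s..t}|lborel. (\<integral>x. g r x * \<phi> x \<partial>\<nu>))))"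

definition strong_solution :: "'a measure \<Rightarrow> 'a measure \<Rightarrow> ('a \<Rightarrow> 'a measure) \<Rightarrow> ('a \<Rightarrow> 'a measure)
      \<Rightarrow> ('a \<Rightarrow> real) \<Rightarrow> ('a \<Rightarrow> real) \<Rightarrow> (real \<Rightarrow> 'a \<Rightarrow> real) \<Rightarrow> bool" where
  "strong_solution \<nu>1 \<nu>2 m1 m2 \<mu> u0 u \<longleftrightarrow>
     cont_L2 \<nu>1 u \<and>
     (AE x in \<nu>1. u 0 x = u0 x) \<and>
     (\<exists>g. W12loc_deriv \<nu>1 u g \<and>
        (AE t in lborel. t > 0 \<longrightarrow> opA \<nu>1 \<nu>2 m1 m2 \<mu> (u t) (\<lambda>x. - g t x)))"

end

theory Submission
  imports Defs
begin

text \<open>Pairing the equation with \<open>u(t) - \<overline>u\<^sub>0\<close>: the velocity has zero mean, so the mean is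
  conserved; the term \<open>-\<Delta>\<^sub>1 u\<close> for \<open>m\<^sup>1\<close> dissipates at least \<open>F\<^sub>1(u) \<ge> \<lambda>\<^sub>2 \<parallel>u - \<overline>u\<parallel>\<close> by the
  Poincare inequality, and the term \<open>-\<mu> \<Delta>\<^sub>1 u\<close> for \<open>m\<^sup>2\<close> dissipates a nonnegative amount.
  Hence \<open>d/dt \<parallel>u - \<overline>u\<^sub>0\<parallel>\<^sup>2 \<le> -2 \<lambda>\<^sub>2 \<parallel>u - \<overline>u\<^sub>0\<parallel>\<close>: the distance to the mean decreases with
  speed at least \<open>\<lambda>\<^sub>2\<close> until it vanishes. Since \<open>u\<close> is only \<open>W\<^sup>1\<^sup>,\<^sup>2\<^sub>l\<^sub>o\<^sub>c\<close>, this differential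
  inequality is used in integrated form on short intervals, where the velocity is bounded in
  \<open>L\<^sup>\<infinity>\<close> (subgradients of \<open>F\<^sub>1\<close> are) and \<open>u\<close> is \<open>L\<^sup>2\<close>-continuous.\<close>

lemma abs_mult_le_weighted_squares:
  fixes a b d :: real
  assumes "d > 0"
  shows "\<bar>a * b\<bar> \<le> a\<^sup>2 / (2 * d) + d * b\<^sup>2 / 2"
proof -
  have "0 \<le> (\<bar>a\<bar> - d * \<bar>b\<bar>)\<^sup>2" by simp
  hence "2 * d * \<bar>a * b\<bar> \<le> a\<^sup>2 + d\<^sup>2 * b\<^sup>2"
    by (simp add: power2_eq_square algebra_simps abs_mult)
  thus ?thesis using assms by (simp add: field_simps power2_eq_square)
qed

lemma le_two_sqrt_mult_if_le_weighted_sums: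
  fixes X a b :: real
  assumes le: "\<And>d. d > 0 \<Longrightarrow> X \<le> a / d + d * b" and "a \<ge> 0" "b \<ge> 0"
  shows "X \<le> 2 * sqrt (a * b)"
proof (cases "a > 0 \<and> b > 0")
  case True
  define d where "d = sqrt a / sqrt b"
  have "d > 0" "a / d = sqrt (a * b)" "d * b = sqrt (a * b)"
    using True by (auto simp: d_def real_sqrt_mult field_simps)
  thus ?thesis using le[of d] by simp
next
  case False
  hence "a = 0 \<or> b = 0" using assms by auto
  have "X \<le> 0 + e" if e: "e > 0" for e
  proof (cases "a = 0")
    case True
    define d where "d = e / (b + 1)"
    have d: "d > 0" using e assms by (simp add: d_def)
    have "d * b \<le> d * (b + 1)" using d by simp
    also have "\<dots> = e" using assms by (simp add: d_def)
    finally show ?thesis using le[OF d] True by simp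
  next
    case False
    hence "b = 0" using \<open>a = 0 \<or> b = 0\<close> by simp
    define d where "d = (a + 1) / e"
    have d: "d > 0" using e assms by (simp add: d_def)
    have "a / d \<le> (a + 1) / d" using d by (simp add: divide_right_mono)
    also have "\<dots> = e" using assms e by (simp add: d_def)
    finally show ?thesis using le[OF d] \<open>b = 0\<close> by simp
  qed
  hence "X \<le> 0" by (rule field_le_epsilon)
  thus ?thesis using assms(2,3) by (smt (verit) mult_nonneg_nonneg real_sqrt_ge_zero)
qed

lemma L2_borel_measurable [measurable_dest]: "L2 \<nu> f \<Longrightarrow> f \<in> borel_measurable \<nu>"
  by (simp add: L2_def)

lemma L2_integrable_square: "L2 \<nu> f \<Longrightarrow> integrable \<nu> (\<lambda>x. (f x)\<^sup>2)"
  by (simp add: L2_def)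

lemma L2_integrable_mult:
  assumes f: "L2 \<nu> f" and g: "L2 \<nu> g"
  shows "integrable \<nu> (\<lambda>x. f x * g x)"
proof (rule Bochner_Integration.integrable_bound)
  show "integrable \<nu> (\<lambda>x. (f x)\<^sup>2 / 2 + (g x)\<^sup>2 / 2)"
    using L2_integrable_square[OF f] L2_integrable_square[OF g] by auto
  show "AE x in \<nu>. norm (f x * g x) \<le> norm ((f x)\<^sup>2 / 2 + (g x)\<^sup>2 / 2)"
    using abs_mult_le_weighted_squares[of 1] by auto
qed (use f g in measurable)

lemma L2_add:
  assumes f: "L2 \<nu> f" and g: "L2 \<nu> g"
  shows "L2 \<nu> (\<lambda>x. f x + g x)"
proof -
  have "(\<lambda>x. (f x + g x)\<^sup>2) = (\<lambda>x. (f x)\<^sup>2 + (g x)\<^sup>2 + 2 * (f x * g x))"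
    by (simp add: power2_sum mult.assoc)
  thus ?thesis
    using L2_integrable_mult[OF f g] L2_integrable_square[OF f] L2_integrable_square[OF g] f g
    by (auto simp: L2_def)
qed

lemma L2_uminus: "L2 \<nu> f \<Longrightarrow> L2 \<nu> (\<lambda>x. - f x)"
  by (simp add: L2_def)

lemma L2_diff: "L2 \<nu> f \<Longrightarrow> L2 \<nu> g \<Longrightarrow> L2 \<nu> (\<lambda>x. f x - g x)"
  using L2_add[of \<nu> f "\<lambda>x. - g x"] L2_uminus[of \<nu> g] by simp

lemma L2_const: "finite_measure \<nu> \<Longrightarrow> L2 \<nu> (\<lambda>x. c)"
  by (simp add: L2_def finite_measure.integrable_const)

lemma L2_integrable: "finite_measure \<nu> \<Longrightarrow> L2 \<nu> f \<Longrightarrow> integrable \<nu> f"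
  using L2_integrable_mult[of \<nu> f "\<lambda>x. 1"] L2_const[of \<nu> 1] by simp

lemma L2norm_nonneg: "L2norm \<nu> f \<ge> 0"
  by (simp add: L2norm_def)

lemma L2norm_square: "(L2norm \<nu> f)\<^sup>2 = (\<integral>x. (f x)\<^sup>2 \<partial>\<nu>)"
  by (simp add: L2norm_def)

lemma L2norm_diff_commute: "L2norm \<nu> (\<lambda>x. f x - g x) = L2norm \<nu> (\<lambda>x. g x - f x)"
  by (simp add: L2norm_def power2_commute)

lemma L2_Cauchy_Schwarz_abs:
  assumes f: "L2 \<nu> f" and g: "L2 \<nu> g"
  shows "(\<integral>x. \<bar>f x * g x\<bar> \<partial>\<nu>) \<le> L2norm \<nu> f * L2norm \<nu> g"
proof -
  let ?a = "(\<integral>x. (f x)\<^sup>2 \<partial>\<nu>) / 2" and ?b = "(\<integral>x. (g x)\<^sup>2 \<partial>\<nu>) / 2"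
  have "(\<integral>x. \<bar>f x * g x\<bar> \<partial>\<nu>) \<le> 2 * sqrt (?a * ?b)"
  proof (rule le_two_sqrt_mult_if_le_weighted_sums)
    fix d :: real assume d: "d > 0"
    have "(\<integral>x. \<bar>f x * g x\<bar> \<partial>\<nu>) \<le> (\<integral>x. (f x)\<^sup>2 / (2 * d) + d * (g x)\<^sup>2 / 2 \<partial>\<nu>)"
      using L2_integrable_mult[OF f g] L2_integrable_square[OF f] L2_integrable_square[OF g]
        abs_mult_le_weighted_squares[OF d]
      by (intro integral_mono) auto
    also have "\<dots> = ?a / d + d * ?b"
      using L2_integrable_square[OF f] L2_integrable_square[OF g] by (simp add: field_simps)
    finally show "(\<integral>x. \<bar>f x * g x\<bar> \<partial>\<nu>) \<le> ?a / d + d * ?b" .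
  qed auto
  also have "\<dots> = L2norm \<nu> f * L2norm \<nu> g"
  proof -
    have "sqrt (4::real) = 2" by simp
    thus ?thesis by (simp add: L2norm_def real_sqrt_mult[symmetric] real_sqrt_divide)
  qed
  finally show ?thesis .
qed

lemma L2_Cauchy_Schwarz:
  "L2 \<nu> f \<Longrightarrow> L2 \<nu> g \<Longrightarrow> \<bar>\<integral>x. f x * g x \<partial>\<nu>\<bar> \<le> L2norm \<nu> f * L2norm \<nu> g"
  by (rule order_trans[OF integral_abs_bound L2_Cauchy_Schwarz_abs])

lemma L2norm_triangle:
  assumes f: "L2 \<nu> f" and g: "L2 \<nu> g"
  shows "L2norm \<nu> (\<lambda>x. f x + g x) \<le> L2norm \<nu> f + L2norm \<nu> g"
proof -
  have "(\<lambda>x. (f x + g x)\<^sup>2) = (\<lambda>x. (f x)\<^sup>2 + (g x)\<^sup>2 + 2 * (f x * g x))"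
    by (simp add: power2_sum mult.assoc)
  hence "(L2norm \<nu> (\<lambda>x. f x + g x))\<^sup>2
      = (L2norm \<nu> f)\<^sup>2 + (L2norm \<nu> g)\<^sup>2 + 2 * (\<integral>x. f x * g x \<partial>\<nu>)"
    using L2_integrable_square[OF f] L2_integrable_square[OF g] L2_integrable_mult[OF f g]
    by (simp add: L2norm_square)
  also have "\<dots> \<le> (L2norm \<nu> f + L2norm \<nu> g)\<^sup>2"
    using L2_Cauchy_Schwarz[OF f g] by (simp add: power2_sum)
  finally show ?thesis
    using L2norm_nonneg[of \<nu> f] L2norm_nonneg[of \<nu> g] by (simp add: power2_le_iff_abs_le)
qed

lemma L2norm_diff_triangle:
  assumes "L2 \<nu> f" "L2 \<nu> g" "L2 \<nu> h"
  shows "L2norm \<nu> (\<lambda>x. f x - h x) \<le> L2norm \<nu> (\<lambda>x. f x - g x) + L2norm \<nu> (\<lambda>x. g x - h x)"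
  using L2norm_triangle[OF L2_diff L2_diff, OF assms(1,2) assms(2,3)] by simp

lemma L2norm_reverse_triangle:
  assumes "L2 \<nu> f" "L2 \<nu> g" "L2 \<nu> h"
  shows "\<bar>L2norm \<nu> (\<lambda>x. f x - h x) - L2norm \<nu> (\<lambda>x. g x - h x)\<bar> \<le> L2norm \<nu> (\<lambda>x. f x - g x)"
  using L2norm_diff_triangle[OF assms] L2norm_diff_triangle[OF assms(2,1,3)]
    L2norm_diff_commute[of \<nu> f g] by linarith

lemma integral_abs_le_L2norm:
  assumes fm: "finite_measure \<nu>" and f: "L2 \<nu> f"
  shows "(\<integral>x. \<bar>f x\<bar> \<partial>\<nu>) \<le> sqrt (measure \<nu> (space \<nu>)) * L2norm \<nu> f"
  using L2_Cauchy_Schwarz_abs[OF f L2_const[OF fm, of 1]]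
  by (simp add: L2norm_def finite_measure.integrable_const[OF fm] mult.commute)

lemma random_walk_space_sets: "random_walk_space M m \<nu> \<Longrightarrow> sets \<nu> = sets M"
  by (simp add: random_walk_space_def)

lemma random_walk_space_space: "random_walk_space M m \<nu> \<Longrightarrow> space \<nu> = space M"
  by (rule sets_eq_imp_space_eq) (rule random_walk_space_sets)

lemma random_walk_space_kernel:
  assumes "random_walk_space M m \<nu>" "x \<in> space \<nu>"
  shows "prob_space (m x)" and "sets (m x) = sets M"
  using assms random_walk_space_space[OF assms(1)] by (auto simp: random_walk_space_def)

lemma random_walk_space_borel_measurable_kernel:
  assumes "random_walk_space M m \<nu>" "x \<in> space \<nu>" "f \<in> borel_measurable M"
  shows "f \<in> borel_measurable (m x)"
  by (metis assms(3) measurable_cong_sets[OF random_walk_space_kernel(2)[OF assms(1,2)] refl])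

lemma random_walk_space_nn_integral_measurable:
  assumes rws: "random_walk_space M m \<nu>" and f: "f \<in> borel_measurable (M \<Otimes>\<^sub>M M)"
  shows "(\<lambda>x. \<integral>\<^sup>+ y. f (x, y) \<partial>m x) \<in> borel_measurable \<nu>"
proof -
  have "m \<in> measurable M (subprob_algebra M)"
    using rws unfolding random_walk_space_def
    by (intro measurable_subprob_algebra) (auto intro: prob_space_imp_subprob_space)
  hence "(\<lambda>x. \<integral>\<^sup>+ y. f (x, y) \<partial>m x) \<in> borel_measurable M"
    by (rule nn_integral_measurable_subprob_algebra2[rotated]) (simp add: f)
  thus ?thesis by (simp add: measurable_cong_sets[OF random_walk_space_sets[OF rws] refl])
qed

lemma F1_const: "F1 \<nu> m (\<lambda>x. c) = 0"
  by (simp add: F1_def)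

lemma F1_add_le:
  assumes rws: "random_walk_space M m \<nu>"
    and a_meas[measurable]: "a \<in> borel_measurable M" and b_meas[measurable]: "b \<in> borel_measurable M"
  shows "F1 \<nu> m (\<lambda>x. a x + b x) \<le> F1 \<nu> m a + F1 \<nu> m b"
proof -
  let ?I = "\<lambda>f x. \<integral>\<^sup>+ y. ennreal \<bar>f y - f x\<bar> \<partial>m x"
  have "(\<integral>\<^sup>+ x. ?I (\<lambda>x. a x + b x) x \<partial>\<nu>) \<le> (\<integral>\<^sup>+ x. ?I a x + ?I b x \<partial>\<nu>)"
  proof (rule nn_integral_mono)
    fix x assume x: "x \<in> space \<nu>"
    have [measurable]: "a \<in> borel_measurable (m x)" "b \<in> borel_measurable (m x)"
      by (rule random_walk_space_borel_measurable_kernel[OF rws x], fact)+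
    have "?I (\<lambda>x. a x + b x) x \<le> (\<integral>\<^sup>+ y. ennreal \<bar>a y - a x\<bar> + ennreal \<bar>b y - b x\<bar> \<partial>m x)"
      by (intro nn_integral_mono) (simp add: ennreal_plus[symmetric] del: ennreal_plus)
    also have "\<dots> = ?I a x + ?I b x"
      by (intro nn_integral_add) measurable
    finally show "?I (\<lambda>x. a x + b x) x \<le> ?I a x + ?I b x" .
  qed
  also have "\<dots> = (\<integral>\<^sup>+ x. ?I a x \<partial>\<nu>) + (\<integral>\<^sup>+ x. ?I b x \<partial>\<nu>)"
    using random_walk_space_nn_integral_measurable[OF rws, of "\<lambda>(x, y). ennreal \<bar>a y - a x\<bar>"]
      random_walk_space_nn_integral_measurable[OF rws, of "\<lambda>(x, y). ennreal \<bar>b y - b x\<bar>"]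
    by (intro nn_integral_add) auto
  finally show ?thesis
    unfolding F1_def distrib_left[symmetric] by (rule mult_left_mono) simp
qed

text \<open>Reversibility turns the integral of \<open>|z(y)|\<close> against \<open>dm\<^sub>x(y) d\<nu>(x)\<close> into
  the integral of \<open>|z(x)|\<close>, so \<open>F\<^sub>1(z) \<le> \<frac>12(\<parallel>z\<parallel>\<^sub>1 + \<parallel>z\<parallel>\<^sub>1)\<close>.\<close>
lemma F1_le_integral_abs:
  assumes rws: "random_walk_space M m \<nu>" and rev: "reversible M m \<nu>"
    and z[measurable]: "z \<in> borel_measurable M" and zi: "integrable \<nu> z"
  shows "F1 \<nu> m z \<le> ennreal (\<integral>x. \<bar>z x\<bar> \<partial>\<nu>)"
proof -
  have z\<nu>[measurable]: "z \<in> borel_measurable \<nu>"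
    by (simp add: measurable_cong_sets[OF random_walk_space_sets[OF rws] refl])
  have mass: "(\<integral>\<^sup>+ y. c \<partial>m x) = c" if "x \<in> space \<nu>" for x and c :: ennreal
    using random_walk_space_kernel(1)[OF rws that] by (simp add: prob_space.emeasure_space_1)
  have "(\<integral>\<^sup>+ x. (\<integral>\<^sup>+ y. ennreal \<bar>z y - z x\<bar> \<partial>m x) \<partial>\<nu>)
      \<le> (\<integral>\<^sup>+ x. (\<integral>\<^sup>+ y. ennreal \<bar>z y\<bar> \<partial>m x) + ennreal \<bar>z x\<bar> \<partial>\<nu>)"
  proof (rule nn_integral_mono)
    fix x assume x: "x \<in> space \<nu>"
    have [measurable]: "z \<in> borel_measurable (m x)"
      by (rule random_walk_space_borel_measurable_kernel[OF rws x z])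
    have "(\<integral>\<^sup>+ y. ennreal \<bar>z y - z x\<bar> \<partial>m x) \<le> (\<integral>\<^sup>+ y. ennreal \<bar>z y\<bar> + ennreal \<bar>z x\<bar> \<partial>m x)"
      by (intro nn_integral_mono) (simp add: ennreal_plus[symmetric] del: ennreal_plus)
    also have "\<dots> = (\<integral>\<^sup>+ y. ennreal \<bar>z y\<bar> \<partial>m x) + ennreal \<bar>z x\<bar>"
      using prob_space.emeasure_space_1[OF random_walk_space_kernel(1)[OF rws x]]
      by (subst nn_integral_add) simp_all
    finally show "(\<integral>\<^sup>+ y. ennreal \<bar>z y - z x\<bar> \<partial>m x) \<le> \<dots>" .
  qed
  also have "\<dots> = (\<integral>\<^sup>+ x. (\<integral>\<^sup>+ y. ennreal \<bar>z y\<bar> \<partial>m x) \<partial>\<nu>) + (\<integral>\<^sup>+ x. ennreal \<bar>z x\<bar> \<partial>\<nu>)"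
    using random_walk_space_nn_integral_measurable[OF rws, of "\<lambda>(x, y). ennreal \<bar>z y\<bar>"]
    by (intro nn_integral_add) auto
  also have "(\<integral>\<^sup>+ x. (\<integral>\<^sup>+ y. ennreal \<bar>z y\<bar> \<partial>m x) \<partial>\<nu>) = (\<integral>\<^sup>+ x. (\<integral>\<^sup>+ y. ennreal \<bar>z x\<bar> \<partial>m x) \<partial>\<nu>)"
    using rev[unfolded reversible_def, rule_format, of "\<lambda>(x, y). ennreal \<bar>z y\<bar>"] by simp
  also have "\<dots> = (\<integral>\<^sup>+ x. ennreal \<bar>z x\<bar> \<partial>\<nu>)"
    using mass by (intro nn_integral_cong) simp
  also have "(\<integral>\<^sup>+ x. ennreal \<bar>z x\<bar> \<partial>\<nu>) = ennreal (\<integral>x. \<bar>z x\<bar> \<partial>\<nu>)"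
    using zi by (intro nn_integral_eq_integral) auto
  finally have "F1 \<nu> m z \<le> ennreal (1/2) * (ennreal (\<integral>x. \<bar>z x\<bar> \<partial>\<nu>) + ennreal (\<integral>x. \<bar>z x\<bar> \<partial>\<nu>))"
    unfolding F1_def by (rule mult_left_mono) simp
  also have "\<dots> = (ennreal (1/2) * ennreal 2) * ennreal (\<integral>x. \<bar>z x\<bar> \<partial>\<nu>)"
    by (simp add: mult_2[symmetric] mult.assoc)
  also have "ennreal (1/2) * ennreal 2 = 1"
    by (subst ennreal_mult[symmetric]) auto
  finally show ?thesis by simp
qed

lemma subdiff_L2_pairing:
  fixes F :: "('a \<Rightarrow> real) \<Rightarrow> ennreal"
  assumes sd: "subdiff_L2 \<nu> F u v" and fm: "finite_measure \<nu>"
    and F_const: "\<And>c. F (\<lambda>x. c) = 0"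
    and F_add: "\<And>a b. L2 \<nu> a \<Longrightarrow> L2 \<nu> b \<Longrightarrow> F (\<lambda>x. a x + b x) \<le> F a + F b"
    and F_le: "\<And>z. L2 \<nu> z \<Longrightarrow> F z \<le> ennreal (\<integral>x. \<bar>z x\<bar> \<partial>\<nu>)"
  shows "\<exists>r. F u = ennreal r \<and> 0 \<le> r \<and> r \<le> (\<integral>x. v x * u x \<partial>\<nu>)"
    and "\<And>z. L2 \<nu> z \<Longrightarrow> \<bar>\<integral>x. v x * z x \<partial>\<nu>\<bar> \<le> (\<integral>x. \<bar>z x\<bar> \<partial>\<nu>)"
    and "\<And>c. (\<integral>x. v x * c \<partial>\<nu>) = 0"
proof -
  have u: "L2 \<nu> u"
    and subgrad: "\<And>w. L2 \<nu> w \<Longrightarrow>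
      enn2ereal (F u) + ereal (\<integral>x. v x * (w x - u x) \<partial>\<nu>) \<le> enn2ereal (F w)"
    using sd by (auto simp: subdiff_L2_def)
  have "enn2ereal (F u) + ereal (- (\<integral>x. v x * u x \<partial>\<nu>)) \<le> 0"
    using subgrad[OF L2_const[OF fm, of 0]] F_const[of 0] by (simp add: zero_ennreal.rep_eq)
  moreover obtain r where r: "F u = ennreal r" "0 \<le> r"
    using calculation by (cases "F u") (auto simp: ennreal_top_neq_one)
  ultimately show "\<exists>r. F u = ennreal r \<and> 0 \<le> r \<and> r \<le> (\<integral>x. v x * u x \<partial>\<nu>)"
    by (auto simp: enn2ereal_ennreal)
  txt \<open>The subgradient inequality at \<open>u + z\<close> together with subadditivity of \<open>F\<close>.\<close>
  have pairing_le_F: "ereal (\<integral>x. v x * z x \<partial>\<nu>) \<le> enn2ereal (F z)" if z: "L2 \<nu> z" for z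
  proof -
    have "ereal r + ereal (\<integral>x. v x * z x \<partial>\<nu>) \<le> enn2ereal (F (\<lambda>x. u x + z x))"
      using subgrad[OF L2_add[OF u z]] r by (simp add: enn2ereal_ennreal)
    also have "\<dots> \<le> enn2ereal (F u + F z)"
      using F_add[OF u z] less_eq_ennreal.rep_eq by blast
    also have "\<dots> = ereal r + enn2ereal (F z)"
      using r by (simp add: plus_ennreal.rep_eq enn2ereal_ennreal)
    finally show ?thesis by (cases "enn2ereal (F z)") auto
  qed
  have pairing_le: "(\<integral>x. v x * z x \<partial>\<nu>) \<le> (\<integral>x. \<bar>z x\<bar> \<partial>\<nu>)" if z: "L2 \<nu> z" for z
  proof -
    have "ereal (\<integral>x. v x * z x \<partial>\<nu>) \<le> enn2ereal (ennreal (\<integral>x. \<bar>z x\<bar> \<partial>\<nu>))"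
      using pairing_le_F[OF z] F_le[OF z] less_eq_ennreal.rep_eq order_trans by blast
    thus ?thesis by (simp add: enn2ereal_ennreal)
  qed
  show "\<bar>\<integral>x. v x * z x \<partial>\<nu>\<bar> \<le> (\<integral>x. \<bar>z x\<bar> \<partial>\<nu>)" if z: "L2 \<nu> z" for z
    using pairing_le[OF z] pairing_le[OF L2_uminus[OF z]] by simp
  have const_le: "(\<integral>x. v x * c \<partial>\<nu>) \<le> 0" for c
    using pairing_le_F[OF L2_const[OF fm]] F_const by (simp add: zero_ennreal.rep_eq)
  show "(\<integral>x. v x * c \<partial>\<nu>) = 0" for c
    using const_le[of c] const_le[of "- c"] by simp
qed

lemma subdiff_F1_pairing:
  assumes rws: "random_walk_space M m \<nu>" and rev: "reversible M m \<nu>"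
    and fm: "finite_measure \<nu>" and sd: "subdiff_L2 \<nu> (F1 \<nu> m) u v"
  shows "\<exists>r. F1 \<nu> m u = ennreal r \<and> 0 \<le> r \<and> r \<le> (\<integral>x. v x * u x \<partial>\<nu>)"
    and "\<And>z. L2 \<nu> z \<Longrightarrow> \<bar>\<integral>x. v x * z x \<partial>\<nu>\<bar> \<le> (\<integral>x. \<bar>z x\<bar> \<partial>\<nu>)"
    and "\<And>c. (\<integral>x. v x * c \<partial>\<nu>) = 0"
proof -
  have M_meas: "f \<in> borel_measurable M" if "L2 \<nu> f" for f
    using L2_borel_measurable[OF that]
    by (simp add: measurable_cong_sets[OF random_walk_space_sets[OF rws] refl])
  have F1_add: "F1 \<nu> m (\<lambda>x. a x + b x) \<le> F1 \<nu> m a + F1 \<nu> m b" if "L2 \<nu> a" "L2 \<nu> b" for a b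
    by (intro F1_add_le[OF rws] M_meas that)
  have F1_le: "F1 \<nu> m z \<le> ennreal (\<integral>x. \<bar>z x\<bar> \<partial>\<nu>)" if "L2 \<nu> z" for z
    by (intro F1_le_integral_abs[OF rws rev] M_meas L2_integrable[OF fm] that)
  show "\<exists>r. F1 \<nu> m u = ennreal r \<and> 0 \<le> r \<and> r \<le> (\<integral>x. v x * u x \<partial>\<nu>)"
    by (rule subdiff_L2_pairing(1)[OF sd fm F1_const F1_add F1_le])
  show "\<And>z. L2 \<nu> z \<Longrightarrow> \<bar>\<integral>x. v x * z x \<partial>\<nu>\<bar> \<le> (\<integral>x. \<bar>z x\<bar> \<partial>\<nu>)"
    by (rule subdiff_L2_pairing(2)[OF sd fm F1_const F1_add F1_le])
  show "\<And>c. (\<integral>x. v x * c \<partial>\<nu>) = 0"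
    by (rule subdiff_L2_pairing(3)[OF sd fm F1_const F1_add F1_le])
qed

lemma finite_measure_density_bounded:
  assumes fm: "finite_measure \<nu>" and [measurable]: "f \<in> borel_measurable \<nu>"
    and nonneg: "AE x in \<nu>. 0 \<le> f x" and bounded: "AE x in \<nu>. f x \<le> C"
  shows "finite_measure (density \<nu> (\<lambda>x. ennreal (f x)))"
proof -
  have "AE x in \<nu>. norm (f x) \<le> norm C" using nonneg bounded by eventually_elim auto
  hence "integrable \<nu> f"
    by (intro Bochner_Integration.integrable_bound[OF finite_measure.integrable_const[OF fm, of C]]) simp_all
  hence "integrable (density \<nu> (\<lambda>x. ennreal (f x))) (\<lambda>x. 1::real)"
    using nonneg by (subst integrable_density) auto
  thus ?thesis
    by (intro finite_measureI) (simp add: integrable_iff_bounded)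
qed

lemma L2_density_bounded:
  assumes fm: "finite_measure \<nu>" and [measurable]: "f \<in> borel_measurable \<nu>"
    and nonneg: "AE x in \<nu>. 0 \<le> f x" and bounded: "AE x in \<nu>. f x \<le> C"
    and z: "L2 \<nu> z"
  shows "L2 (density \<nu> (\<lambda>x. ennreal (f x))) z"
    and "(\<integral>x. \<bar>z x\<bar> \<partial>density \<nu> (\<lambda>x. ennreal (f x))) \<le> C * (\<integral>x. \<bar>z x\<bar> \<partial>\<nu>)"
proof -
  have [measurable]: "z \<in> borel_measurable \<nu>" using z by measurable
  have abs_z: "integrable \<nu> (\<lambda>x. \<bar>z x\<bar>)" using L2_integrable[OF fm z] by simp
  have dominated: "AE x in \<nu>. norm (f x * g x) \<le> norm (C * g x)" if "\<And>x. g x \<ge> 0" for g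
    using nonneg bounded
  proof eventually_elim
    fix x assume "0 \<le> f x" "f x \<le> C"
    thus "norm (f x * g x) \<le> norm (C * g x)"
      using that[of x] by (simp add: abs_mult mult_right_mono)
  qed
  have "integrable \<nu> (\<lambda>x. C * (z x)\<^sup>2)" using L2_integrable_square[OF z] by simp
  hence "integrable \<nu> (\<lambda>x. f x * (z x)\<^sup>2)"
    by (rule Bochner_Integration.integrable_bound) (use dominated in auto)
  hence "integrable (density \<nu> (\<lambda>x. ennreal (f x))) (\<lambda>x. (z x)\<^sup>2)"
    using nonneg by (subst integrable_density) auto
  thus "L2 (density \<nu> (\<lambda>x. ennreal (f x))) z"
    by (simp add: L2_def)
  have "integrable \<nu> (\<lambda>x. C * \<bar>z x\<bar>)" using abs_z by simp
  hence "integrable \<nu> (\<lambda>x. f x * \<bar>z x\<bar>)"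
    by (rule Bochner_Integration.integrable_bound) (use dominated in auto)
  moreover have "AE x in \<nu>. f x * \<bar>z x\<bar> \<le> C * \<bar>z x\<bar>"
    using bounded by eventually_elim (simp add: mult_right_mono)
  ultimately have "(\<integral>x. f x * \<bar>z x\<bar> \<partial>\<nu>) \<le> (\<integral>x. C * \<bar>z x\<bar> \<partial>\<nu>)"
    using abs_z by (intro integral_mono_AE) simp_all
  thus "(\<integral>x. \<bar>z x\<bar> \<partial>density \<nu> (\<lambda>x. ennreal (f x))) \<le> C * (\<integral>x. \<bar>z x\<bar> \<partial>\<nu>)"
    using nonneg by (subst integral_density) auto
qed

lemma pairing_split_density:
  assumes density: "\<nu>2 = density \<nu>1 (\<lambda>x. ennreal (\<mu> x))"
    and [measurable]: "\<mu> \<in> borel_measurable \<nu>1" "w \<in> borel_measurable \<nu>1"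
    and \<mu>_nonneg: "AE x in \<nu>1. 0 \<le> \<mu> x" and v_eq: "AE x in \<nu>1. - v x = v1 x - \<mu> x * w x"
    and v: "L2 \<nu>1 v" and v1: "L2 \<nu>1 v1" and z: "L2 \<nu>1 z"
  shows "(\<integral>x. v x * z x \<partial>\<nu>1) = (\<integral>x. w x * z x \<partial>\<nu>2) - (\<integral>x. v1 x * z x \<partial>\<nu>1)"
proof -
  have [measurable]: "v \<in> borel_measurable \<nu>1" "v1 \<in> borel_measurable \<nu>1" "z \<in> borel_measurable \<nu>1"
    using v v1 z by measurable
  have "(\<integral>x. w x * z x \<partial>\<nu>2) = (\<integral>x. \<mu> x * (w x * z x) \<partial>\<nu>1)"
    unfolding density using \<mu>_nonneg by (subst integral_density) auto
  also have "\<dots> = (\<integral>x. v x * z x + v1 x * z x \<partial>\<nu>1)"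
  proof (intro integral_cong_AE)
    show "AE x in \<nu>1. \<mu> x * (w x * z x) = v x * z x + v1 x * z x"
      using v_eq
    proof eventually_elim
      fix x assume "- v x = v1 x - \<mu> x * w x"
      hence "\<mu> x * w x = v x + v1 x" by linarith
      thus "\<mu> x * (w x * z x) = v x * z x + v1 x * z x" by (metis distrib_right mult.assoc)
    qed
  qed simp_all
  also have "\<dots> = (\<integral>x. v x * z x \<partial>\<nu>1) + (\<integral>x. v1 x * z x \<partial>\<nu>1)"
    using L2_integrable_mult[OF v z] L2_integrable_mult[OF v1 z] by simp
  finally show ?thesis by simp
qed

text \<open>The properties of the velocity \<open>v = -A u\<close> that drive the decay: \<open>v\<close> lies in the
  ball of radius \<open>K\<close> of \<open>L\<^sup>\<infinity> = (L\<^sup>1)\<^sup>*\<close>, has zero mean, and dissipates at least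
  \<open>lambda \<parallel>u - \<overline>u\<parallel>\<^sub>2\<close> (from the Poincare inequality).\<close>
definition descent_direction ::
    "'a measure \<Rightarrow> real \<Rightarrow> real \<Rightarrow> ('a \<Rightarrow> real) \<Rightarrow> ('a \<Rightarrow> real) \<Rightarrow> bool" where
  "descent_direction \<nu> K lambda u v \<longleftrightarrow>
     (\<forall>z. L2 \<nu> z \<longrightarrow> (\<integral>x. v x * z x \<partial>\<nu>) \<le> K * (\<integral>x. \<bar>z x\<bar> \<partial>\<nu>)) \<and>
     (\<forall>c. (\<integral>x. v x * c \<partial>\<nu>) = 0) \<and>
     (\<integral>x. v x * u x \<partial>\<nu>) \<le> - lambda * L2norm \<nu> (\<lambda>x. u x - mean \<nu> u)"

lemma opA_descent_direction:
  assumes rws1: "random_walk_space M m1 \<nu>1" and rev1: "reversible M m1 \<nu>1"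
    and rws2: "random_walk_space M m2 \<nu>2" and rev2: "reversible M m2 \<nu>2"
    and fm: "finite_measure \<nu>1" and density: "\<nu>2 = density \<nu>1 (\<lambda>x. ennreal (\<mu> x))"
    and \<mu>_meas[measurable]: "\<mu> \<in> borel_measurable \<nu>1"
    and \<mu>_nonneg: "AE x in \<nu>1. 0 \<le> \<mu> x" and \<mu>_bounded: "AE x in \<nu>1. \<mu> x \<le> C"
    and poincare: "ennreal (lambda * L2norm \<nu>1 (\<lambda>x. u x - mean \<nu>1 u)) \<le> F1 \<nu>1 m1 u"
    and op: "opA \<nu>1 \<nu>2 m1 m2 \<mu> u (\<lambda>x. - v x)"
  shows "descent_direction \<nu>1 (1 + C) lambda u v"
proof -
  obtain v1 w where D1: "Delta1 \<nu>1 m1 u (\<lambda>x. - v1 x)" and D2: "Delta1 \<nu>2 m2 u w"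
    and v_eq: "AE x in \<nu>1. - v x = v1 x - \<mu> x * w x"
    using op unfolding opA_def by blast
  have sd1: "subdiff_L2 \<nu>1 (F1 \<nu>1 m1) u v1" and sd2: "subdiff_L2 \<nu>2 (F1 \<nu>2 m2) u (\<lambda>x. - w x)"
    using D1 D2 by (simp_all add: Delta1_def)
  have u: "L2 \<nu>1 u" and v: "L2 \<nu>1 v"
    using op L2_uminus[of \<nu>1 "\<lambda>x. - v x"] by (simp_all add: opA_def)
  have v1: "L2 \<nu>1 v1" using sd1 by (simp add: subdiff_L2_def)
  have fm2: "finite_measure \<nu>2"
    unfolding density by (rule finite_measure_density_bounded[OF fm \<mu>_meas \<mu>_nonneg \<mu>_bounded])
  have "L2 \<nu>2 w" using sd2 L2_uminus[of \<nu>2 "\<lambda>x. - w x"] by (simp add: subdiff_L2_def)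
  hence w: "w \<in> borel_measurable \<nu>1"
    by (simp add: L2_def density)
  note S1 = subdiff_F1_pairing[OF rws1 rev1 fm sd1]
  note S2 = subdiff_F1_pairing[OF rws2 rev2 fm2 sd2]
  note L2_\<nu>2 = L2_density_bounded[OF fm \<mu>_meas \<mu>_nonneg \<mu>_bounded, folded density]
  have split: "(\<integral>x. v x * z x \<partial>\<nu>1) = (\<integral>x. w x * z x \<partial>\<nu>2) - (\<integral>x. v1 x * z x \<partial>\<nu>1)"
    if "L2 \<nu>1 z" for z
    by (rule pairing_split_density[OF density \<mu>_meas w \<mu>_nonneg v_eq v v1 that])
  have "(\<integral>x. v x * z x \<partial>\<nu>1) \<le> (1 + C) * (\<integral>x. \<bar>z x\<bar> \<partial>\<nu>1)" if z: "L2 \<nu>1 z" for z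
    using S1(2)[OF z] S2(2)[OF L2_\<nu>2(1)[OF z]] L2_\<nu>2(2)[OF z]
    unfolding split[OF z] by (simp add: algebra_simps)
  moreover have "(\<integral>x. v x * c \<partial>\<nu>1) = 0" for c
    using S1(3)[of c] S2(3)[of c] split[OF L2_const[OF fm, of c]] by auto
  moreover have "(\<integral>x. v x * u x \<partial>\<nu>1) \<le> - lambda * L2norm \<nu>1 (\<lambda>x. u x - mean \<nu>1 u)"
  proof -
    obtain r1 where r1: "F1 \<nu>1 m1 u = ennreal r1" "0 \<le> r1" "r1 \<le> (\<integral>x. v1 x * u x \<partial>\<nu>1)"
      using S1(1) by blast
    obtain r2 where "0 \<le> r2" "r2 \<le> (\<integral>x. - w x * u x \<partial>\<nu>2)"
      using S2(1) by blast
    moreover have "lambda * L2norm \<nu>1 (\<lambda>x. u x - mean \<nu>1 u) \<le> r1"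
      using poincare r1(1,2) ennreal_le_iff by simp
    ultimately show ?thesis using r1(3) unfolding split[OF u] by simp
  qed
  ultimately show ?thesis by (simp add: descent_direction_def)
qed

lemma le_at_left_endpoint:
  fixes f g :: "real \<Rightarrow> real"
  assumes "a < b" and "continuous_on {a..b} f" and "continuous_on {a..b} g"
    and le: "\<And>s. s \<in> {a<..b} \<Longrightarrow> f s \<le> g s"
  shows "f a \<le> g a"
proof (rule tendsto_le[of "at_right a"])
  show "(f \<longlongrightarrow> f a) (at_right a)" "(g \<longlongrightarrow> g a) (at_right a)"
    using assms(1-3) by (auto simp: continuous_on_Icc_at_rightD)
  show "\<forall>\<^sub>F s in at_right a. f s \<le> g s"
    using \<open>a < b\<close> le unfolding eventually_at_right[OF \<open>a < b\<close>] by auto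
qed simp

lemma decay_step_of_local_estimate:
  fixes N :: "real \<Rightarrow> real"
  assumes loc: "\<exists>h0>0. \<forall>h. 0 < h \<longrightarrow> h \<le> h0 \<longrightarrow>
      (N (c + h))\<^sup>2 \<le> (N c)\<^sup>2 - 2 * h * (lambda * N c - \<epsilon> * N c)"
    and pos: "N c > 0" and \<epsilon>: "0 < \<epsilon>" "\<epsilon> < lambda" and "c < T"
  shows "\<exists>h>0. c + h \<le> T \<and> N (c + h) \<le> N c - (lambda - \<epsilon>) * h"
proof -
  obtain h0 where "h0 > 0"
    and h0: "\<And>h. 0 < h \<Longrightarrow> h \<le> h0 \<Longrightarrow> (N (c + h))\<^sup>2 \<le> (N c)\<^sup>2 - 2 * h * (lambda * N c - \<epsilon> * N c)"
    using loc by blast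
  define h where "h = min h0 (min (T - c) (N c / lambda))"
  have h: "0 < h" "h \<le> h0" "c + h \<le> T"
    using \<open>h0 > 0\<close> \<open>c < T\<close> pos \<epsilon> by (auto simp: h_def)
  have "h \<le> N c / lambda" by (simp add: h_def)
  hence "lambda * h \<le> N c" using \<epsilon> by (simp add: pos_le_divide_eq mult.commute)
  have "(N (c + h))\<^sup>2 \<le> (N c)\<^sup>2 - 2 * h * (lambda * N c - \<epsilon> * N c)"
    using h0 h by simp
  also have "\<dots> = (N c - (lambda - \<epsilon>) * h)\<^sup>2 - ((lambda - \<epsilon>) * h)\<^sup>2"
    by (simp add: power2_eq_square algebra_simps)
  also have "\<dots> \<le> (N c - (lambda - \<epsilon>) * h)\<^sup>2"
    by simp
  finally have "(N (c + h))\<^sup>2 \<le> (N c - (lambda - \<epsilon>) * h)\<^sup>2" .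
  moreover have "0 \<le> N c - (lambda - \<epsilon>) * h"
    using \<open>lambda * h \<le> N c\<close> \<epsilon> h by (smt (verit) mult_right_mono)
  ultimately have "N (c + h) \<le> N c - (lambda - \<epsilon>) * h"
    by (rule power2_le_imp_le)
  thus ?thesis using h by blast
qed

lemma continuous_on_neg_to_the_right:
  fixes f :: "real \<Rightarrow> real"
  assumes "continuous_on {a..b} f" "c \<in> {a..b}" "c < b" "f c < 0"
  shows "\<exists>r\<in>{c<..b}. f r < 0"
proof -
  obtain d where "d > 0" and d: "\<And>r. r \<in> {a..b} \<Longrightarrow> dist r c < d \<Longrightarrow> dist (f r) (f c) < - f c"
    using assms unfolding continuous_on_iff by (metis neg_0_less_iff_less)
  define r where "r = min b (c + d / 2)"
  have "r \<in> {c<..b}" "r \<in> {a..b}" "dist r c < d"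
    using assms \<open>d > 0\<close> by (auto simp: r_def dist_real_def)
  thus ?thesis using d[of r] by (intro bexI[of _ r]) (auto simp: dist_real_def)
qed

lemma linear_decay_up_to_slack:
  fixes N :: "real \<Rightarrow> real"
  assumes "s0 < T" and cont: "continuous_on {s0..T} N"
    and loc: "\<And>c e. c \<in> {s0..<T} \<Longrightarrow> e > 0 \<Longrightarrow> \<exists>h0>0. \<forall>h. 0 < h \<longrightarrow> h \<le> h0 \<longrightarrow>
      (N (c + h))\<^sup>2 \<le> (N c)\<^sup>2 - 2 * h * (lambda * N c - e)"
    and "\<eta> > 0" and \<epsilon>: "0 < \<epsilon>" "\<epsilon> < lambda"
  shows "N T \<le> max \<eta> (N s0 - (lambda - \<epsilon>) * (T - s0))"
proof -
  txt \<open>\<open>N\<close> stays below \<open>\<psi>\<close> up to \<open>T\<close>: at the last contact point \<open>c\<close> the floor \<open>\<eta>\<close> gives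
    \<open>N c > 0\<close>, so the local estimate with \<open>e = \<epsilon> N c\<close> pushes \<open>N\<close> below \<open>\<psi>\<close> a bit further.\<close>
  define \<psi> where "\<psi> r = max \<eta> (N s0 - (lambda - \<epsilon>) * (r - s0))" for r
  define S where "S = {s0..T} \<inter> (\<lambda>r. N r - \<psi> r) -` {..0}"
  have cont_diff: "continuous_on {s0..T} (\<lambda>r. N r - \<psi> r)"
    unfolding \<psi>_def by (intro continuous_intros cont)
  have "closed S" unfolding S_def
    by (rule continuous_closed_preimage[OF cont_diff]) auto
  moreover have "s0 \<in> S" and S: "S \<subseteq> {s0..T}" using \<open>s0 < T\<close> by (auto simp: S_def \<psi>_def)
  moreover have "bdd_above S" using S by (meson bdd_above_Icc bdd_above_mono)
  ultimately have "Sup S \<in> S" and upper: "\<And>r. r \<in> S \<Longrightarrow> r \<le> Sup S"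
    using closed_contains_Sup cSup_upper by blast+
  define c where "c = Sup S"
  have c: "c \<in> {s0..T}" "N c \<le> \<psi> c" using \<open>Sup S \<in> S\<close> S by (auto simp: c_def S_def)
  have "c = T"
  proof (rule ccontr)
    assume "c \<noteq> T"
    hence "c < T" using c by auto
    have "\<exists>r>c. r \<in> S"
    proof (cases "N c < \<psi> c")
      case True
      thus ?thesis
        using continuous_on_neg_to_the_right[OF cont_diff c(1) \<open>c < T\<close>] c(1)
        by (fastforce simp: S_def)
    next
      case False
      hence "N c = \<psi> c" using c by auto
      hence "N c > 0" using \<open>\<eta> > 0\<close> by (simp add: \<psi>_def)
      then obtain h where h: "h > 0" "c + h \<le> T" and step: "N (c + h) \<le> N c - (lambda - \<epsilon>) * h"
        using decay_step_of_local_estimate[OF _ _ \<epsilon> \<open>c < T\<close>] loc[of c "\<epsilon> * N c"] c \<open>c < T\<close> \<epsilon>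
        by (auto simp: algebra_simps)
      have "N c - (lambda - \<epsilon>) * h \<le> \<psi> (c + h)"
      proof -
        have "0 \<le> (lambda - \<epsilon>) * h" using \<epsilon> h by simp
        moreover have "(lambda - \<epsilon>) * (c + h - s0) = (lambda - \<epsilon>) * (c - s0) + (lambda - \<epsilon>) * h"
          by (simp add: algebra_simps)
        ultimately show ?thesis unfolding \<open>N c = \<psi> c\<close> \<psi>_def by (auto simp: max_def)
      qed
      hence "c + h \<in> S" using step c h by (auto simp: S_def)
      thus ?thesis using h by (intro exI[of _ "c + h"]) auto
    qed
    thus False using upper unfolding c_def by fastforce
  qed
  thus ?thesis using c by (simp add: \<psi>_def)
qed

lemma linear_decay_of_local_estimate:
  fixes N :: "real \<Rightarrow> real"
  assumes "s0 < T" and "continuous_on {s0..T} N" and "lambda > 0"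
    and "\<And>c e. c \<in> {s0..<T} \<Longrightarrow> e > 0 \<Longrightarrow> \<exists>h0>0. \<forall>h. 0 < h \<longrightarrow> h \<le> h0 \<longrightarrow>
      (N (c + h))\<^sup>2 \<le> (N c)\<^sup>2 - 2 * h * (lambda * N c - e)"
  shows "N T \<le> max 0 (N s0 - lambda * (T - s0))"
proof -
  have "N T \<le> max 0 (N s0 - lambda * (T - s0)) + \<delta>" if "\<delta> > 0" for \<delta>
  proof -
    define \<epsilon> where "\<epsilon> = min (lambda / 2) (\<delta> / (T - s0))"
    have \<epsilon>: "0 < \<epsilon>" "\<epsilon> < lambda" using assms \<open>\<delta> > 0\<close> by (auto simp: \<epsilon>_def)
    have "\<epsilon> * (T - s0) \<le> \<delta>" using assms by (simp add: \<epsilon>_def pos_le_divide_eq[symmetric])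
    moreover have "N T \<le> max \<delta> (N s0 - (lambda - \<epsilon>) * (T - s0))"
      using assms \<open>\<delta> > 0\<close> \<epsilon> by (intro linear_decay_up_to_slack)
    ultimately show ?thesis using \<open>\<delta> > 0\<close> by (auto simp: algebra_simps)
  qed
  thus ?thesis by (rule field_le_epsilon)
qed

locale descent_flow =
  fixes \<nu> :: "'a measure" and u g :: "real \<Rightarrow> 'a \<Rightarrow> real" and K lambda :: real
  assumes finite: "finite_measure \<nu>"
    and continuous: "cont_L2 \<nu> u"
    and derivative: "W12loc_deriv \<nu> u g"
    and K_nonneg: "K \<ge> 0" and lambda_pos: "lambda > 0"
    and descent: "AE r in lborel. r > 0 \<longrightarrow> descent_direction \<nu> K lambda (u r) (g r)"
begin

lemma L2_u: "t \<ge> 0 \<Longrightarrow> L2 \<nu> (u t)"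
  using continuous by (simp add: cont_L2_def)

lemma L2_g: "r > 0 \<Longrightarrow> L2 \<nu> (g r)"
  using derivative by (simp add: W12loc_deriv_def)

lemma increment_eq_integral:
  assumes "L2 \<nu> \<phi>" "0 < s" "s \<le> t"
  shows "set_integrable lborel {s..t} (\<lambda>r. \<integral>x. g r x * \<phi> x \<partial>\<nu>)"
    and "(\<integral>x. (u t x - u s x) * \<phi> x \<partial>\<nu>) = (LINT r:{s..t}|lborel. (\<integral>x. g r x * \<phi> x \<partial>\<nu>))"
  using derivative assms by (auto simp: W12loc_deriv_def)

lemma L2norm_diff_tendsto_0:
  "t \<ge> 0 \<Longrightarrow> ((\<lambda>s. L2norm \<nu> (\<lambda>x. u s x - u t x)) \<longlongrightarrow> 0) (at t within {0..})"
  using continuous by (simp add: cont_L2_def)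

lemma L2norm_diff_small:
  assumes "t \<ge> 0" "e > 0"
  shows "\<exists>d>0. \<forall>s\<ge>0. \<bar>s - t\<bar> < d \<longrightarrow> L2norm \<nu> (\<lambda>x. u s x - u t x) < e"
proof -
  obtain d where "d > 0"
    and d: "\<And>s. s \<in> {0..} \<Longrightarrow> s \<noteq> t \<Longrightarrow> dist s t < d \<Longrightarrow> dist (L2norm \<nu> (\<lambda>x. u s x - u t x)) 0 < e"
    using L2norm_diff_tendsto_0[OF assms(1)] assms(2)
    unfolding tendsto_iff eventually_at by blast
  have "L2norm \<nu> (\<lambda>x. u s x - u t x) < e" if "s \<ge> 0" "\<bar>s - t\<bar> < d" for s
    using d[of s] that assms(2) L2norm_nonneg[of \<nu> "\<lambda>x. u s x - u t x"]
    by (cases "s = t") (auto simp: L2norm_def dist_real_def)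
  thus ?thesis using \<open>d > 0\<close> by blast
qed

lemma continuous_on_if_L2_Lipschitz:
  assumes "\<And>s t. s \<ge> 0 \<Longrightarrow> t \<ge> 0 \<Longrightarrow> \<bar>f s - f t\<bar> \<le> C * L2norm \<nu> (\<lambda>x. u s x - u t x)"
  shows "continuous_on {0..} f"
  unfolding continuous_on_def
proof
  fix t :: real assume t: "t \<in> {0..}"
  have "((\<lambda>s. f s - f t) \<longlongrightarrow> 0) (at t within {0..})"
  proof (rule tendsto_0_le[OF L2norm_diff_tendsto_0])
    show "\<forall>\<^sub>F s in at t within {0..}. norm (f s - f t) \<le> norm (L2norm \<nu> (\<lambda>x. u s x - u t x)) * C"
      using assms t
      by (auto simp: eventually_at_filter mult.commute abs_of_nonneg[OF L2norm_nonneg]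
          intro!: always_eventually)
  qed (use t in simp)
  thus "(f \<longlongrightarrow> f t) (at t within {0..})" by (rule LIM_zero_cancel)
qed

lemma integral_u_eq:
  assumes "0 < s" "s \<le> t"
  shows "(\<integral>x. u t x \<partial>\<nu>) = (\<integral>x. u s x \<partial>\<nu>)"
proof -
  have "(LINT r:{s..t}|lborel. (\<integral>x. g r x * 1 \<partial>\<nu>)) = 0"
    unfolding set_lebesgue_integral_def
  proof (rule integral_eq_zero_AE)
    show "AE r in lborel. indicator {s..t} r *\<^sub>R (\<integral>x. g r x * 1 \<partial>\<nu>) = 0"
      using descent
    proof eventually_elim
      fix r assume "r > 0 \<longrightarrow> descent_direction \<nu> K lambda (u r) (g r)"
      thus "indicator {s..t} r *\<^sub>R (\<integral>x. g r x * 1 \<partial>\<nu>) = 0"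
        using assms by (cases "r \<in> {s..t}") (auto simp: descent_direction_def)
    qed
  qed
  hence "(\<integral>x. u t x - u s x \<partial>\<nu>) = 0"
    using increment_eq_integral(2)[OF L2_const[OF finite, of 1] assms] by simp
  thus ?thesis
    using L2_integrable[OF finite L2_u] assms by simp
qed

lemma mean_u_eq:
  assumes "t \<ge> 0"
  shows "mean \<nu> (u t) = mean \<nu> (u 0)"
proof (cases "t = 0")
  case False
  let ?I = "\<lambda>s. \<integral>x. u s x \<partial>\<nu>"
  have "continuous_on {0..} ?I"
  proof (rule continuous_on_if_L2_Lipschitz)
    fix s t :: real assume "s \<ge> 0" "t \<ge> 0"
    hence "\<bar>?I s - ?I t\<bar> = \<bar>\<integral>x. u s x - u t x \<partial>\<nu>\<bar>"
      using L2_integrable[OF finite L2_u] by simp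
    also have "\<dots> \<le> (\<integral>x. \<bar>u s x - u t x\<bar> \<partial>\<nu>)"
      by (rule integral_abs_bound)
    also have "\<dots> \<le> sqrt (measure \<nu> (space \<nu>)) * L2norm \<nu> (\<lambda>x. u s x - u t x)"
      using \<open>s \<ge> 0\<close> \<open>t \<ge> 0\<close> by (intro integral_abs_le_L2norm finite L2_diff L2_u)
    finally show "\<bar>?I s - ?I t\<bar> \<le> sqrt (measure \<nu> (space \<nu>)) * L2norm \<nu> (\<lambda>x. u s x - u t x)" .
  qed
  hence cont: "continuous_on {0..t} ?I" by (rule continuous_on_subset) auto
  have t: "0 < t" using assms False by simp
  have eq: "?I s = ?I t" if "s \<in> {0<..t}" for s
    using integral_u_eq[of s t] that by simp
  have "?I 0 \<le> ?I t"
    by (rule le_at_left_endpoint[OF t cont continuous_on_const]) (metis eq order_refl)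
  moreover have "?I t \<le> ?I 0"
    by (rule le_at_left_endpoint[OF t continuous_on_const cont]) (metis eq order_refl)
  ultimately show ?thesis by (simp add: mean_def)
qed simp

definition deviation :: "real \<Rightarrow> real" where
  "deviation t = L2norm \<nu> (\<lambda>x. u t x - mean \<nu> (u 0))"

lemma L2_mean: "L2 \<nu> (\<lambda>x. mean \<nu> (u 0))"
  by (rule L2_const[OF finite])

lemma deviation_diff_le:
  "s \<ge> 0 \<Longrightarrow> t \<ge> 0 \<Longrightarrow> \<bar>deviation s - deviation t\<bar> \<le> L2norm \<nu> (\<lambda>x. u s x - u t x)"
  unfolding deviation_def by (intro L2norm_reverse_triangle L2_u L2_mean)

lemma continuous_on_deviation: "continuous_on {0..} deviation"
  by (rule continuous_on_if_L2_Lipschitz[where C = 1]) (simp add: deviation_diff_le)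

lemma velocity_pairing_le:
  assumes r: "r > 0" and dir: "descent_direction \<nu> K lambda (u r) (g r)" and t: "t \<ge> 0"
  shows "(\<integral>x. g r x * (u t x - mean \<nu> (u 0)) \<partial>\<nu>)
    \<le> - lambda * deviation r + K * (\<integral>x. \<bar>u t x - u r x\<bar> \<partial>\<nu>)"
proof -
  let ?c = "mean \<nu> (u 0)"
  have ur: "L2 \<nu> (u r)" and ut: "L2 \<nu> (u t)" and gr: "L2 \<nu> (g r)"
    using r t by (simp_all add: L2_u L2_g)
  have "(\<integral>x. g r x * (u t x - ?c) \<partial>\<nu>)
      = (\<integral>x. g r x * u r x \<partial>\<nu>) + (\<integral>x. g r x * (u t x - u r x) \<partial>\<nu>) - (\<integral>x. g r x * ?c \<partial>\<nu>)"
  proof -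
    have "(\<integral>x. g r x * (u t x - ?c) \<partial>\<nu>) = (\<integral>x. g r x * u r x + g r x * (u t x - u r x) - g r x * ?c \<partial>\<nu>)"
      by (rule Bochner_Integration.integral_cong) (auto simp: algebra_simps)
    thus ?thesis
      using L2_integrable_mult[OF gr ur] L2_integrable_mult[OF gr L2_diff[OF ut ur]]
        L2_integrable_mult[OF gr L2_mean]
      by simp
  qed
  also have "\<dots> \<le> - lambda * deviation r + K * (\<integral>x. \<bar>u t x - u r x\<bar> \<partial>\<nu>)"
    using dir L2_diff[OF ut ur] mean_u_eq[of r] r
    by (auto simp: descent_direction_def deviation_def)
  finally show ?thesis .
qed

lemma deviation_square_diff_le:
  assumes "s \<ge> 0" "t \<ge> 0"
  shows "(deviation t)\<^sup>2 - (deviation s)\<^sup>2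
    \<le> 2 * (\<integral>x. (u t x - u s x) * (u t x - mean \<nu> (u 0)) \<partial>\<nu>)"
proof -
  let ?c = "mean \<nu> (u 0)"
  have us: "L2 \<nu> (\<lambda>x. u s x - ?c)" and ut: "L2 \<nu> (\<lambda>x. u t x - ?c)"
    using assms by (simp_all add: L2_diff L2_u L2_mean)
  have "(deviation t)\<^sup>2 - (deviation s)\<^sup>2 = (\<integral>x. (u t x - ?c)\<^sup>2 - (u s x - ?c)\<^sup>2 \<partial>\<nu>)"
    using L2_integrable_square[OF ut] L2_integrable_square[OF us]
    by (simp add: deviation_def L2norm_square)
  also have "\<dots> \<le> (\<integral>x. 2 * ((u t x - u s x) * (u t x - ?c)) \<partial>\<nu>)"
  proof (rule integral_mono)
    fix x
    have "2 * ((u t x - u s x) * (u t x - ?c)) - ((u t x - ?c)\<^sup>2 - (u s x - ?c)\<^sup>2) = (u t x - u s x)\<^sup>2"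
      by (simp add: power2_eq_square algebra_simps)
    thus "(u t x - ?c)\<^sup>2 - (u s x - ?c)\<^sup>2 \<le> 2 * ((u t x - u s x) * (u t x - ?c))"
      by (metis diff_ge_0_iff_ge zero_le_power2)
  qed (use L2_integrable_square[OF ut] L2_integrable_square[OF us]
          L2_integrable_mult[OF L2_diff[OF L2_u L2_u] ut] assms in simp_all)
  finally show ?thesis by simp
qed

lemma energy_estimate:
  assumes st: "0 < s" "s \<le> t"
    and bounds: "\<And>r. r \<in> {s..t} \<Longrightarrow> A \<le> deviation r \<and> (\<integral>x. \<bar>u t x - u r x\<bar> \<partial>\<nu>) \<le> B"
  shows "(deviation t)\<^sup>2 - (deviation s)\<^sup>2 \<le> 2 * (t - s) * (- lambda * A + K * B)"
proof -
  define \<phi> where "\<phi> = (\<lambda>x. u t x - mean \<nu> (u 0))"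
  have \<phi>: "L2 \<nu> \<phi>" unfolding \<phi>_def using st by (intro L2_diff L2_u L2_mean) simp
  have "(deviation t)\<^sup>2 - (deviation s)\<^sup>2 \<le> 2 * (\<integral>x. (u t x - u s x) * \<phi> x \<partial>\<nu>)"
    using deviation_square_diff_le st by (simp add: \<phi>_def)
  also have "\<dots> = 2 * (LINT r:{s..t}|lborel. (\<integral>x. g r x * \<phi> x \<partial>\<nu>))"
    using increment_eq_integral(2)[OF \<phi> st] by simp
  also have "(LINT r:{s..t}|lborel. (\<integral>x. g r x * \<phi> x \<partial>\<nu>)) \<le> (LINT r:{s..t}|lborel. - lambda * A + K * B)"
  proof (rule set_integral_mono_AE[OF increment_eq_integral(1)[OF \<phi> st]])
    show "set_integrable lborel {s..t} (\<lambda>r. - lambda * A + K * B)"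
      using st by (simp add: set_integrable_def emeasure_lborel_Icc integrable_real_indicator)
    show "AE r\<in>{s..t} in lborel. (\<integral>x. g r x * \<phi> x \<partial>\<nu>) \<le> - lambda * A + K * B"
      using descent
    proof eventually_elim
      fix r assume dir: "r > 0 \<longrightarrow> descent_direction \<nu> K lambda (u r) (g r)"
      show "r \<in> {s..t} \<longrightarrow> (\<integral>x. g r x * \<phi> x \<partial>\<nu>) \<le> - lambda * A + K * B"
      proof
        assume r: "r \<in> {s..t}"
        hence "(\<integral>x. g r x * \<phi> x \<partial>\<nu>) \<le> - lambda * deviation r + K * (\<integral>x. \<bar>u t x - u r x\<bar> \<partial>\<nu>)"
          using dir st velocity_pairing_le[of r t] by (simp add: \<phi>_def)
        also have "\<dots> \<le> - lambda * A + K * B"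
        proof -
          have "lambda * A \<le> lambda * deviation r"
            using bounds[OF r] lambda_pos by (simp add: mult_left_mono)
          moreover have "K * (\<integral>x. \<bar>u t x - u r x\<bar> \<partial>\<nu>) \<le> K * B"
            using bounds[OF r] K_nonneg by (simp add: mult_left_mono)
          ultimately show ?thesis by linarith
        qed
        finally show "(\<integral>x. g r x * \<phi> x \<partial>\<nu>) \<le> - lambda * A + K * B" .
      qed
    qed
  qed
  also have "(LINT r:{s..t}|lborel. - lambda * A + K * B) = (t - s) * (- lambda * A + K * B)"
    using st by (simp add: set_integral_const)
  finally show ?thesis by (simp add: algebra_simps)
qed

lemma local_decay:
  assumes c: "c > 0" and e: "e > 0"
  shows "\<exists>h0>0. \<forall>h. 0 < h \<longrightarrow> h \<le> h0 \<longrightarrow>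
    (deviation (c + h))\<^sup>2 \<le> (deviation c)\<^sup>2 - 2 * h * (lambda * deviation c - e)"
proof -
  define V where "V = sqrt (measure \<nu> (space \<nu>))"
  have V: "V \<ge> 0" by (simp add: V_def)
  define \<epsilon> where "\<epsilon> = e / (lambda + 2 * K * V + 1)"
  have den: "lambda + 2 * K * V + 1 > 0" using lambda_pos K_nonneg V by (simp add: add_pos_nonneg)
  hence \<epsilon>: "\<epsilon> > 0" and "\<epsilon> * (lambda + 2 * K * V + 1) = e" using e by (simp_all add: \<epsilon>_def)
  hence \<epsilon>_e: "(lambda + 2 * K * V) * \<epsilon> \<le> e" by (simp add: algebra_simps)
  obtain d where "d > 0" and d: "\<And>s. s \<ge> 0 \<Longrightarrow> \<bar>s - c\<bar> < d \<Longrightarrow> L2norm \<nu> (\<lambda>x. u s x - u c x) < \<epsilon>"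
    using L2norm_diff_small[of c \<epsilon>] c \<epsilon> by auto
  have "(deviation (c + h))\<^sup>2 \<le> (deviation c)\<^sup>2 - 2 * h * (lambda * deviation c - e)"
    if h: "0 < h" "h \<le> d / 2" for h
  proof -
    have bounds: "deviation c - \<epsilon> \<le> deviation r \<and> (\<integral>x. \<bar>u (c + h) x - u r x\<bar> \<partial>\<nu>) \<le> 2 * V * \<epsilon>"
      if r: "r \<in> {c..c + h}" for r
    proof
      have near: "L2norm \<nu> (\<lambda>x. u s x - u c x) < \<epsilon>" if "s \<in> {c..c + h}" for s
        using that c h \<open>d > 0\<close> by (intro d) auto
      show "deviation c - \<epsilon> \<le> deviation r"
        using deviation_diff_le[of r c] near[OF r] r c by simp
      have "(\<integral>x. \<bar>u (c + h) x - u r x\<bar> \<partial>\<nu>) \<le> V * L2norm \<nu> (\<lambda>x. u (c + h) x - u r x)"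
        unfolding V_def using r c h by (intro integral_abs_le_L2norm finite L2_diff L2_u) auto
      also have "\<dots> \<le> V * (L2norm \<nu> (\<lambda>x. u (c + h) x - u c x) + L2norm \<nu> (\<lambda>x. u c x - u r x))"
        using r c h V by (intro mult_left_mono L2norm_diff_triangle L2_u) auto
      also have "\<dots> \<le> V * (\<epsilon> + \<epsilon>)"
        using near[of "c + h"] near[OF r] h V L2norm_diff_commute[of \<nu> "u c" "u r"]
        by (intro mult_left_mono) auto
      finally show "(\<integral>x. \<bar>u (c + h) x - u r x\<bar> \<partial>\<nu>) \<le> 2 * V * \<epsilon>" by simp
    qed
    have "(deviation (c + h))\<^sup>2 - (deviation c)\<^sup>2
        \<le> 2 * (c + h - c) * (- lambda * (deviation c - \<epsilon>) + K * (2 * V * \<epsilon>))"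
      using c h by (intro energy_estimate bounds) auto
    also have "\<dots> = 2 * h * ((lambda + 2 * K * V) * \<epsilon>) - 2 * h * (lambda * deviation c)"
      by (simp add: algebra_simps)
    also have "\<dots> \<le> 2 * h * e - 2 * h * (lambda * deviation c)"
      using \<epsilon>_e h by simp
    finally show ?thesis by (simp add: algebra_simps)
  qed
  thus ?thesis using \<open>d > 0\<close> by (intro exI[of _ "d / 2"]) auto
qed

lemma deviation_decay:
  assumes "0 \<le> s0" "s0 < T"
  shows "deviation T \<le> max 0 (deviation s0 - lambda * (T - s0))"
proof -
  have cont: "continuous_on {a..T} deviation" if "0 \<le> a" for a
    using continuous_on_subset[OF continuous_on_deviation] that by auto
  have interior: "deviation T \<le> max 0 (deviation s - lambda * (T - s))" if s: "0 < s" "s \<le> T" for s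
  proof (cases "s = T")
    case False
    show ?thesis
    proof (rule linear_decay_of_local_estimate[OF _ cont lambda_pos])
      fix c e :: real assume "c \<in> {s..<T}" "e > 0"
      thus "\<exists>h0>0. \<forall>h. 0 < h \<longrightarrow> h \<le> h0 \<longrightarrow>
          (deviation (c + h))\<^sup>2 \<le> (deviation c)\<^sup>2 - 2 * h * (lambda * deviation c - e)"
        using local_decay[of c e] s by auto
    qed (use s False in auto)
  qed simp
  show ?thesis
    by (rule le_at_left_endpoint[OF \<open>s0 < T\<close> continuous_on_const])
       (use assms interior in \<open>auto intro!: continuous_intros cont\<close>)
qed

end

lemma mean_cong_AE:
  assumes "AE x in \<nu>. f x = g x" "f \<in> borel_measurable \<nu>" "g \<in> borel_measurable \<nu>"
  shows "mean \<nu> f = mean \<nu> g"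
  unfolding mean_def using integral_cong_AE[OF assms(2,3,1)] by (rule arg_cong)

lemma L2norm_cong_AE:
  assumes "AE x in \<nu>. f x = g x" and [measurable]: "f \<in> borel_measurable \<nu>" "g \<in> borel_measurable \<nu>"
  shows "L2norm \<nu> f = L2norm \<nu> g"
proof -
  have "AE x in \<nu>. (f x)\<^sup>2 = (g x)\<^sup>2" using assms(1) by eventually_elim simp
  hence "(\<integral>x. (f x)\<^sup>2 \<partial>\<nu>) = (\<integral>x. (g x)\<^sup>2 \<partial>\<nu>)" by (intro integral_cong_AE) simp_all
  thus ?thesis by (simp add: L2norm_def)
qed

lemma strong_solution_descent_flow:
  assumes rws1: "random_walk_space M m1 \<nu>1" and rev1: "reversible M m1 \<nu>1"
    and rws2: "random_walk_space M m2 \<nu>2" and rev2: "reversible M m2 \<nu>2"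
    and fm: "finite_measure \<nu>1" and density: "\<nu>2 = density \<nu>1 (\<lambda>x. ennreal (\<mu> x))"
    and \<mu>_meas: "\<mu> \<in> borel_measurable \<nu>1"
    and \<mu>_nonneg: "AE x in \<nu>1. 0 \<le> \<mu> x" and \<mu>_bounded: "AE x in \<nu>1. \<mu> x \<le> C" and "C \<ge> 0"
    and lambda_pos: "lambda > 0"
    and poincare: "\<And>v. L2 \<nu>1 v \<Longrightarrow> ennreal (lambda * L2norm \<nu>1 (\<lambda>x. v x - mean \<nu>1 v)) \<le> F1 \<nu>1 m1 v"
    and sol: "strong_solution \<nu>1 \<nu>2 m1 m2 \<mu> u0 u"
  shows "\<exists>g. descent_flow \<nu>1 u g (1 + C) lambda"
proof -
  obtain g where g: "W12loc_deriv \<nu>1 u g"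
    and op: "AE t in lborel. t > 0 \<longrightarrow> opA \<nu>1 \<nu>2 m1 m2 \<mu> (u t) (\<lambda>x. - g t x)"
    using sol by (auto simp: strong_solution_def)
  have "AE t in lborel. t > 0 \<longrightarrow> descent_direction \<nu>1 (1 + C) lambda (u t) (g t)"
    using op
  proof eventually_elim
    fix t assume op_t: "t > 0 \<longrightarrow> opA \<nu>1 \<nu>2 m1 m2 \<mu> (u t) (\<lambda>x. - g t x)"
    show "t > 0 \<longrightarrow> descent_direction \<nu>1 (1 + C) lambda (u t) (g t)"
    proof
      assume "t > 0"
      with op_t have "opA \<nu>1 \<nu>2 m1 m2 \<mu> (u t) (\<lambda>x. - g t x)" ..
      moreover from this have "L2 \<nu>1 (u t)" by (simp add: opA_def)
      ultimately show "descent_direction \<nu>1 (1 + C) lambda (u t) (g t)"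
        by (intro opA_descent_direction[OF rws1 rev1 rws2 rev2 fm density \<mu>_meas \<mu>_nonneg \<mu>_bounded]
            poincare)
    qed
  qed
  moreover have "cont_L2 \<nu>1 u" using sol by (simp add: strong_solution_def)
  ultimately have "descent_flow \<nu>1 u g (1 + C) lambda"
    using fm g lambda_pos \<open>C \<ge> 0\<close> by (intro descent_flow.intro) simp_all
  thus ?thesis by blast
qed

theorem mainTheorem11:
  fixes M \<nu>1 \<nu>2 :: "'a measure"
    and m1 m2 :: "'a \<Rightarrow> 'a measure"
    and \<mu> :: "'a \<Rightarrow> real"
    and lambda2 :: real
    and u0 :: "'a \<Rightarrow> real"
    and u :: "real \<Rightarrow> 'a \<Rightarrow> real"
  assumes rws1: "random_walk_space M m1 \<nu>1" and rev1: "reversible M m1 \<nu>1"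
    and rws2: "random_walk_space M m2 \<nu>2" and rev2: "reversible M m2 \<nu>2"
    and \<mu>_meas: "\<mu> \<in> borel_measurable M"
    and \<mu>_nonneg: "\<forall>x\<in>space M. 0 \<le> \<mu> x"
    and density: "\<nu>2 = density \<nu>1 (\<lambda>x. ennreal (\<mu> x))"
    and \<mu>_Linf: "\<exists>C. AE x in \<nu>1. \<mu> x \<le> C"
    and \<mu>_pos: "AE x in \<nu>1. \<mu> x > 0"
    and finite: "emeasure \<nu>1 (space \<nu>1) < \<infinity>"
    and lambda2_pos: "lambda2 > 0"
    and poincare: "\<forall>v. L2 \<nu>1 v \<longrightarrow>
                     ennreal (lambda2 * L2norm \<nu>1 (\<lambda>x. v x - mean \<nu>1 v)) \<le> F1 \<nu>1 m1 v"
    and u0_L2: "L2 \<nu>1 u0"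
    and sol: "strong_solution \<nu>1 \<nu>2 m1 m2 \<mu> u0 u"
  shows "\<forall>t>0. L2norm \<nu>1 (\<lambda>x. u t x - mean \<nu>1 u0)
                \<le> max 0 (L2norm \<nu>1 (\<lambda>x. u0 x - mean \<nu>1 u0) - lambda2 * t)"
proof -
  have fm: "finite_measure \<nu>1" using finite by (intro finite_measureI) auto
  obtain C0 where C0: "AE x in \<nu>1. \<mu> x \<le> C0" using \<mu>_Linf by blast
  have C: "AE x in \<nu>1. \<mu> x \<le> max C0 0" using C0 by eventually_elim simp
  have \<mu>_meas1: "\<mu> \<in> borel_measurable \<nu>1"
    using \<mu>_meas by (simp add: measurable_cong_sets[OF random_walk_space_sets[OF rws1] refl])
  have \<mu>_nonneg1: "AE x in \<nu>1. 0 \<le> \<mu> x"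
    using \<mu>_nonneg by (intro AE_I2) (simp add: random_walk_space_space[OF rws1])
  obtain g where "descent_flow \<nu>1 u g (1 + max C0 0) lambda2"
    using strong_solution_descent_flow[OF rws1 rev1 rws2 rev2 fm density \<mu>_meas1 \<mu>_nonneg1 C _
        lambda2_pos _ sol] poincare by auto
  then interpret descent_flow \<nu>1 u g "1 + max C0 0" lambda2 .
  have u_0: "AE x in \<nu>1. u 0 x = u0 x" using sol by (simp add: strong_solution_def)
  have [measurable]: "u 0 \<in> borel_measurable \<nu>1" "u0 \<in> borel_measurable \<nu>1"
    using L2_u[of 0] u0_L2 by (simp_all add: L2_def)
  have mean_0: "mean \<nu>1 (u 0) = mean \<nu>1 u0"
    using u_0 by (intro mean_cong_AE) simp_all
  moreover have "deviation 0 = L2norm \<nu>1 (\<lambda>x. u0 x - mean \<nu>1 u0)"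
    unfolding deviation_def mean_0 using u_0 by (intro L2norm_cong_AE) (auto elim: AE_mp)
  ultimately show ?thesis
    using deviation_decay[of 0] by (simp add: deviation_def)
qed

end
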